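(* Let $n\ge 2$. Then $\mathrm{B}=\Gamma^{\overline{03}}=\Gamma^{\overline{12}}$, where for a subspace $L\subseteq\mathrm{C}$ we write $\Gamma^{L}=\{T\in\mathrm{C}^\times: T L T^{-1}\subseteq L\}$.
   Context: Let $\mathrm{C}$ be either the real Clifford algebra $C\ell_{p,q}$ with $p+q=n$, or the complex Clifford algebra $C\ell(\mathbb{C}^n)$. It has identity $e$ and generators $e_1,\dots,e_n$ satisfying $e_ae_b+e_be_a=2\eta_{ab}e$. In the real case $\eta=\mathrm{diag}(1,\dots,1,-1,\dots,-1)$ with $p$ entries $+1$ and $q$ entries $-1$. In the complex case $\eta=I_n$. $\mathrm{C}^k$ is the grade-$k$ subspace, spanned by the products $e_{a_1}\cdots e_{a_k}$ with $a_1<\dots<a_k$. The grade involution $U\mapsto\hat U$ is the linear automorphism acting on $\mathrm{C}^k$ as $(-1)^k$. The reversion $U\mapsto\tilde U$ is the linear anti-automorphism acting on $\mathrm{C}^k$ as $(-1)^{k(k-1)/2}$. For $m=0,1,2,3$ let $\mathrm{C}^{\overline m}=\bigoplus_{k\equiv m \pmod 4}\mathrm{C}^k$, and $\mathrm{C}^{\overline{kl}}=\mathrm{C}^{\overline k}\oplus\mathrm{C}^{\overline l}$. $\Gamma^{\overline{kl}}$ denotes $\Gamma^L$ with $L=\mathrm{C}^{\overline{kl}}$. $\mathrm{C}^\times$ is the group of invertible elements. $\mathrm{Z}$ is the center: $\mathrm{Z}=\mathrm{C}^0$ for $n$ even and $\mathrm{Z}=\mathrm{C}^0\oplus\mathrm{C}^n$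 for $n$ odd. $\mathrm{Z}^\times$ is the set of invertible elements of $\mathrm{Z}$. Define $\mathrm{B}:=\{T\in\mathrm{C}^\times:\ \hat{\tilde T} T\in\mathrm{Z}^\times\}$. *)

theory Defs
  imports Complex_Main
begin

text \<open>Clifford algebra with n generators and diagonal signature s (s i = e_i squared, a scalar).
  Elements are coefficient functions on finite subsets of the index set {..<n}; the subset
  A = {a1<...<ak} stands for the basis blade e_{a1}...e_{ak}.\<close>

definition cl_carrier :: "nat \<Rightarrow> (nat set \<Rightarrow> 'a::field) set" where
  "cl_carrier n = {U. \<forall>A. U A \<noteq> 0 \<longrightarrow> A \<subseteq> {..<n}}"

definition blade_coef :: "(nat \<Rightarrow> 'a::field) \<Rightarrow> nat set \<Rightarrow> nat set \<Rightarrow> 'a" where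
  "blade_coef s A B =
     (-1) ^ card {(a, b). a \<in> A \<and> b \<in> B \<and> b < a} * (\<Prod>i\<in>A \<inter> B. s i)"

definition cl_mult :: "nat \<Rightarrow> (nat \<Rightarrow> 'a::field) \<Rightarrow> (nat set \<Rightarrow> 'a) \<Rightarrow> (nat set \<Rightarrow> 'a) \<Rightarrow> (nat set \<Rightarrow> 'a)" where
  "cl_mult n s U V = (\<lambda>C. \<Sum>A\<in>Pow {..<n}. \<Sum>B\<in>Pow {..<n}.
      if (A - B) \<union> (B - A) = C then U A * V B * blade_coef s A B else 0)"

definition cl_one :: "nat set \<Rightarrow> 'a::field" where
  "cl_one = (\<lambda>A. if A = {} then 1 else 0)"

definition cl_hat :: "(nat set \<Rightarrow> 'a::field) \<Rightarrow> (nat set \<Rightarrow> 'a)" where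
  "cl_hat U = (\<lambda>A. (-1) ^ card A * U A)"

definition cl_tilde :: "(nat set \<Rightarrow> 'a::field) \<Rightarrow> (nat set \<Rightarrow> 'a)" where
  "cl_tilde U = (\<lambda>A. (-1) ^ (card A * (card A - 1) div 2) * U A)"

definition cl_units :: "nat \<Rightarrow> (nat \<Rightarrow> 'a::field) \<Rightarrow> (nat set \<Rightarrow> 'a) set" where
  "cl_units n s = {T \<in> cl_carrier n. \<exists>V \<in> cl_carrier n.
      cl_mult n s T V = cl_one \<and> cl_mult n s V T = cl_one}"

definition cl_inv :: "nat \<Rightarrow> (nat \<Rightarrow> 'a::field) \<Rightarrow> (nat set \<Rightarrow> 'a) \<Rightarrow> (nat set \<Rightarrow> 'a)" where
  "cl_inv n s T = (SOME V. V \<in> cl_carrier n \<and> cl_mult n s T V = cl_one \<and> cl_mult n s V T = cl_one)"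

definition cl_center :: "nat \<Rightarrow> (nat set \<Rightarrow> 'a::field) set" where
  "cl_center n = {U \<in> cl_carrier n. \<forall>A. U A \<noteq> 0 \<longrightarrow> A = {} \<or> (odd n \<and> A = {..<n})}"

definition cl_center_units :: "nat \<Rightarrow> (nat \<Rightarrow> 'a::field) \<Rightarrow> (nat set \<Rightarrow> 'a) set" where
  "cl_center_units n s = cl_center n \<inter> cl_units n s"

definition cl_grades_mod4 :: "nat \<Rightarrow> nat \<Rightarrow> nat \<Rightarrow> (nat set \<Rightarrow> 'a::field) set" where
  "cl_grades_mod4 n k l = {U \<in> cl_carrier n. \<forall>A. U A \<noteq> 0 \<longrightarrow> card A mod 4 = k \<or> card A mod 4 = l}"

definition cl_Gamma :: "nat \<Rightarrow> (nat \<Rightarrow> 'a::field) \<Rightarrow> (nat set \<Rightarrow> 'a) set \<Rightarrow> (nat set \<Rightarrow> 'a) set" where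
  "cl_Gamma n s L = {T \<in> cl_units n s. \<forall>U \<in> L. cl_mult n s (cl_mult n s T U) (cl_inv n s T) \<in> L}"

definition cl_B :: "nat \<Rightarrow> (nat \<Rightarrow> 'a::field) \<Rightarrow> (nat set \<Rightarrow> 'a) set" where
  "cl_B n s = {T \<in> cl_units n s. cl_mult n s (cl_hat (cl_tilde T)) T \<in> cl_center_units n s}"

text \<open>signatures: real Cl_{p,q} (first p generators square to 1, next q to -1); complex: all 1\<close>
definition real_sig :: "nat \<Rightarrow> nat \<Rightarrow> real" where
  "real_sig p i = (if i < p then 1 else -1)"

definition complex_sig :: "nat \<Rightarrow> complex" where
  "complex_sig i = 1"

end

theory Submission
  imports Defs
begin

text \<open>
  Write U* for the Clifford conjugation hat(tilde U). It is an anti-automorphism acting on grade k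
  by (-1)^(k(k+1)/2), so C^03 and C^12 are its eigenspaces for 1 and -1, and B consists of the
  units T for which z = T* T is central. For such T we have T* = z T^-1, hence conjugation by T
  commutes with the star and preserves both eigenspaces. Conversely, if conjugation by T preserves
  an eigenspace L, then applying the star to T e T^-1 shows that every e in L commutes with z.
  For L = C^12 these include all generators e_a, and an element commuting with the generators is
  central. For L = C^03 they include all trivectors, which suffice when n >= 4; for n <= 3 the
  self-conjugate element z already lies in C^0 + C^3, which is central. No lower bound on n is
  needed.
\<close>

section \<open>Signs of products of basis blades\<close>

definition inversions :: "nat set \<Rightarrow> nat set \<Rightarrow> nat" where
  "inversions A B = card {(a, b). a \<in> A \<and> b \<in> B \<and> b < a}"

lemma blade_coef_inversions: "blade_coef s A B = (-1) ^ inversions A B * (\<Prod>i\<in>A \<inter> B. s i)"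
  by (simp add: blade_coef_def inversions_def)

lemma blade_coef_empty_left [simp]: "blade_coef s {} B = 1"
  by (simp add: blade_coef_def)

lemma blade_coef_empty_right [simp]: "blade_coef s A {} = 1"
  by (simp add: blade_coef_def)

lemma inversions_eq_sum:
  assumes "finite A" "finite B"
  shows "inversions A B = (\<Sum>a\<in>A. \<Sum>b\<in>B. if b < a then 1 else 0)"
proof -
  have "{(a, b). a \<in> A \<and> b \<in> B \<and> b < a} = Sigma A (\<lambda>a. {b\<in>B. b < a})" by auto
  then show ?thesis
    using assms by (simp add: inversions_def card_SigmaI sum.If_cases Int_def)
qed

lemma neg_one_power_sum_sym_diff:
  assumes "finite X" "finite Y"
  shows "(-1::'a::ring_1) ^ sum f (sym_diff X Y) = (-1) ^ sum f X * (-1) ^ sum f Y"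
proof -
  have "sum f X + sum f Y = sum f (sym_diff X Y) + 2 * sum f (X \<inter> Y)"
    using assms by (simp add: sum.union_disjoint sum.Int_Diff[of X f Y] sum.Int_Diff[of Y f X]
        Int_commute Diff_Int_distrib2 disjoint_iff)
  then have "(-1::'a) ^ sum f X * (-1) ^ sum f Y = (-1) ^ (sum f (sym_diff X Y) + 2 * sum f (X \<inter> Y))"
    by (simp only: power_add[symmetric])
  then show ?thesis by (simp add: power_add power_mult)
qed

lemma neg_one_power_inversions_sym_diff_left:
  assumes "finite A" "finite B" "finite D"
  shows "(-1::'a::ring_1) ^ inversions (sym_diff A B) D = (-1) ^ inversions A D * (-1) ^ inversions B D"
  using assms by (simp add: inversions_eq_sum neg_one_power_sum_sym_diff)

lemma neg_one_power_inversions_sym_diff_right: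
  assumes "finite A" "finite B" "finite D"
  shows "(-1::'a::comm_ring_1) ^ inversions A (sym_diff B D) = (-1) ^ inversions A B * (-1) ^ inversions A D"
proof -
  have "(-1::'a) ^ inversions A (sym_diff B D) = (\<Prod>a\<in>A. (-1) ^ (\<Sum>b\<in>sym_diff B D. if b < a then 1 else 0))"
    using assms by (simp add: inversions_eq_sum power_sum)
  also have "\<dots> = (\<Prod>a\<in>A. (-1) ^ (\<Sum>b\<in>B. if b < a then 1 else 0)
      * (-1) ^ (\<Sum>b\<in>D. if b < a then 1 else 0))"
    using assms by (simp add: neg_one_power_sum_sym_diff)
  also have "\<dots> = (-1) ^ inversions A B * (-1) ^ inversions A D"
    using assms by (simp add: inversions_eq_sum power_sum prod.distrib)
  finally show ?thesis .
qed

lemma inversions_add_inversions: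
  assumes "finite A" "finite B"
  shows "inversions A B + inversions B A + card (A \<inter> B) = card A * card B"
proof -
  let ?below = "{(a, b). a \<in> A \<and> b \<in> B \<and> b < a}"
  let ?above = "{(a, b). a \<in> A \<and> b \<in> B \<and> a < b}"
  let ?diag = "{(a, b). a \<in> A \<and> b \<in> B \<and> a = b}"
  have fin: "finite ?below" "finite ?above" "finite ?diag"
    using assms by (auto intro: finite_subset[of _ "A \<times> B"])
  have "?above = prod.swap ` {(b, a). b \<in> B \<and> a \<in> A \<and> a < b}" by auto
  then have above: "card ?above = inversions B A"
    unfolding inversions_def by (simp add: card_image)
  have "?diag = (\<lambda>x. (x, x)) ` (A \<inter> B)" by auto
  then have diag: "card ?diag = card (A \<inter> B)" by (simp add: card_image inj_on_def)
  have "A \<times> B = ?below \<union> ?above \<union> ?diag" by auto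
  then have "card (A \<times> B) = card ?below + card ?above + card ?diag"
    using fin by (simp add: card_Un_disjoint disjoint_iff)
  then show ?thesis
    using above diag by (simp add: inversions_def card_cartesian_product)
qed

lemma blade_coef_commute:
  assumes "finite A" "finite B"
  shows "blade_coef s A B = (-1) ^ (card A * card B + card (A \<inter> B)) * blade_coef s B A"
proof -
  have e: "card A * card B + card (A \<inter> B) = inversions A B + inversions B A + 2 * card (A \<inter> B)"
    using inversions_add_inversions[OF assms] by simp
  show ?thesis
    unfolding blade_coef_inversions e by (simp add: power_add power_mult Int_commute mult.assoc[symmetric])
qed

lemma prod_Int_sym_diff_cocycle:
  fixes s :: "'b \<Rightarrow> 'a::comm_monoid_mult"
  assumes "finite A" "finite B" "finite D"
  shows "prod s (A \<inter> B) * prod s (sym_diff A B \<inter> D) = prod s (B \<inter> D) * prod s (A \<inter> sym_diff B D)"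
proof -
  have "prod s (A \<inter> B) * prod s (sym_diff A B \<inter> D) = prod s ((A \<inter> B) \<union> (sym_diff A B \<inter> D))"
    using assms by (subst prod.union_disjoint) auto
  also have "(A \<inter> B) \<union> (sym_diff A B \<inter> D) = (B \<inter> D) \<union> (A \<inter> sym_diff B D)" by blast
  also have "prod s \<dots> = prod s (B \<inter> D) * prod s (A \<inter> sym_diff B D)"
    using assms by (subst prod.union_disjoint) auto
  finally show ?thesis .
qed

lemma blade_coef_cocycle:
  assumes "finite A" "finite B" "finite D"
  shows "blade_coef s A B * blade_coef s (sym_diff A B) D = blade_coef s B D * blade_coef s A (sym_diff B D)"
  using prod_Int_sym_diff_cocycle[OF assms, of s]
  by (simp add: blade_coef_inversions assms neg_one_power_inversions_sym_diff_left
      neg_one_power_inversions_sym_diff_right mult_ac)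

section \<open>The algebra structure\<close>

lemma sum_collapse:
  assumes "finite P" "\<And>a b. a \<in> Q1 \<Longrightarrow> b \<in> Q2 \<Longrightarrow> f a b \<in> P"
  shows "(\<Sum>y\<in>P. (\<Sum>(a, b)\<in>Q1 \<times> Q2. if f a b = y then g a b else 0) * h y)
    = (\<Sum>(a, b)\<in>Q1 \<times> Q2. g a b * (h (f a b) :: 'a::semiring_0))"
proof -
  have "(\<Sum>y\<in>P. (\<Sum>(a, b)\<in>Q1 \<times> Q2. if f a b = y then g a b else 0) * h y)
      = (\<Sum>y\<in>P. \<Sum>x\<in>Q1 \<times> Q2. if f (fst x) (snd x) = y then g (fst x) (snd x) * h y else 0)"
    by (auto simp: sum_distrib_right split_beta intro!: sum.cong)
  also have "\<dots> = (\<Sum>x\<in>Q1 \<times> Q2. \<Sum>y\<in>P. if f (fst x) (snd x) = y then g (fst x) (snd x) * h y else 0)"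
    by (rule sum.swap)
  also have "\<dots> = (\<Sum>(a, b)\<in>Q1 \<times> Q2. g a b * h (f a b))"
    using assms by (auto simp: sum.delta split_beta intro!: sum.cong)
  finally show ?thesis .
qed

lemma cl_carrier_eq_zero: "U \<in> cl_carrier n \<Longrightarrow> \<not> C \<subseteq> {..<n} \<Longrightarrow> U C = 0"
  unfolding cl_carrier_def by blast

lemma sym_diff_eq_iff: "sym_diff A B = C \<longleftrightarrow> B = sym_diff A C"
  by blast

abbreviation blades :: "nat \<Rightarrow> nat set set" where
  "blades n \<equiv> Pow {..<n}"

lemma finite_blade: "A \<in> blades n \<Longrightarrow> finite A"
  by (auto intro: finite_subset)

lemma cl_mult_pairs:
  "cl_mult n s U V C = (\<Sum>(A, B)\<in>blades n \<times> blades n. if sym_diff A B = C then U A * V B * blade_coef s A B else 0)"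
  by (simp add: cl_mult_def sum.cartesian_product)

lemma cl_mult_left_expand:
  "cl_mult n s (cl_mult n s U V) W E = (\<Sum>A\<in>blades n. \<Sum>B\<in>blades n. \<Sum>D\<in>blades n.
     if sym_diff (sym_diff A B) D = E
     then U A * V B * W D * (blade_coef s A B * blade_coef s (sym_diff A B) D) else 0)"
proof -
  let ?h = "\<lambda>D C. if sym_diff C D = E then W D * blade_coef s C D else 0"
  have "cl_mult n s (cl_mult n s U V) W E = (\<Sum>C\<in>blades n. \<Sum>D\<in>blades n. cl_mult n s U V C * ?h D C)"
    unfolding cl_mult_def[of n s "cl_mult n s U V" W] by (intro sum.cong refl) (simp add: mult_ac)
  also have "\<dots> = (\<Sum>D\<in>blades n. \<Sum>C\<in>blades n. cl_mult n s U V C * ?h D C)"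
    by (rule sum.swap)
  also have "\<dots> = (\<Sum>D\<in>blades n. \<Sum>(A, B)\<in>blades n \<times> blades n.
      U A * V B * blade_coef s A B * ?h D (sym_diff A B))"
    unfolding cl_mult_pairs
    by (intro sum.cong refl sum_collapse) auto
  also have "\<dots> = (\<Sum>(A, B)\<in>blades n \<times> blades n. \<Sum>D\<in>blades n.
      U A * V B * blade_coef s A B * ?h D (sym_diff A B))"
    unfolding split_beta by (rule sum.swap)
  also have "\<dots> = (\<Sum>A\<in>blades n. \<Sum>B\<in>blades n. \<Sum>D\<in>blades n.
     if sym_diff (sym_diff A B) D = E
     then U A * V B * W D * (blade_coef s A B * blade_coef s (sym_diff A B) D) else 0)"
    unfolding sum.cartesian_product[symmetric] by (intro sum.cong refl) (simp add: mult_ac)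
  finally show ?thesis .
qed

lemma cl_mult_right_expand:
  "cl_mult n s U (cl_mult n s V W) E = (\<Sum>A\<in>blades n. \<Sum>B\<in>blades n. \<Sum>D\<in>blades n.
     if sym_diff A (sym_diff B D) = E
     then U A * V B * W D * (blade_coef s B D * blade_coef s A (sym_diff B D)) else 0)"
proof -
  let ?h = "\<lambda>A C. if sym_diff A C = E then U A * blade_coef s A C else 0"
  have "cl_mult n s U (cl_mult n s V W) E = (\<Sum>A\<in>blades n. \<Sum>C\<in>blades n. cl_mult n s V W C * ?h A C)"
    unfolding cl_mult_def[of n s U "cl_mult n s V W"] by (intro sum.cong refl) (simp add: mult_ac)
  also have "\<dots> = (\<Sum>A\<in>blades n. \<Sum>(B, D)\<in>blades n \<times> blades n.
      V B * W D * blade_coef s B D * ?h A (sym_diff B D))"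
    unfolding cl_mult_pairs by (intro sum.cong refl sum_collapse) auto
  also have "\<dots> = (\<Sum>A\<in>blades n. \<Sum>B\<in>blades n. \<Sum>D\<in>blades n.
     if sym_diff A (sym_diff B D) = E
     then U A * V B * W D * (blade_coef s B D * blade_coef s A (sym_diff B D)) else 0)"
    unfolding sum.cartesian_product[symmetric] by (intro sum.cong refl) (simp add: mult_ac)
  finally show ?thesis .
qed

lemma cl_mult_assoc: "cl_mult n s (cl_mult n s U V) W = cl_mult n s U (cl_mult n s V W)"
proof
  fix E
  have "sym_diff (sym_diff A B) D = sym_diff A (sym_diff B D)" for A B D :: "nat set"
    by blast
  then show "cl_mult n s (cl_mult n s U V) W E = cl_mult n s U (cl_mult n s V W) E"
    unfolding cl_mult_left_expand cl_mult_right_expand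
    by (intro sum.cong refl) (simp add: blade_coef_cocycle finite_blade)
qed

definition cl_blade :: "nat set \<Rightarrow> nat set \<Rightarrow> 'a::field" where
  "cl_blade A = (\<lambda>C. if C = A then 1 else 0)"

lemma cl_mult_blade_left:
  assumes "A \<subseteq> {..<n}" "W \<in> cl_carrier n"
  shows "cl_mult n s (cl_blade A) W C = W (sym_diff A C) * blade_coef s A (sym_diff A C)"
proof -
  have "cl_mult n s (cl_blade A) W C = (\<Sum>A'\<in>blades n. if A' = A then
      (\<Sum>B\<in>blades n. if B = sym_diff A C then W B * blade_coef s A B else 0) else 0)"
    unfolding cl_mult_def cl_blade_def by (intro sum.cong refl) (auto simp: sym_diff_eq_iff)
  also have "\<dots> = (\<Sum>B\<in>blades n. if B = sym_diff A C then W B * blade_coef s A B else 0)"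
    using assms(1) by simp
  also have "\<dots> = W (sym_diff A C) * blade_coef s A (sym_diff A C)"
    using cl_carrier_eq_zero[OF assms(2), of "sym_diff A C"] by (auto simp: sum.delta')
  finally show ?thesis .
qed

lemma cl_mult_blade_right:
  assumes "A \<subseteq> {..<n}" "W \<in> cl_carrier n"
  shows "cl_mult n s W (cl_blade A) C = W (sym_diff A C) * blade_coef s (sym_diff A C) A"
proof -
  have "cl_mult n s W (cl_blade A) C = (\<Sum>A'\<in>blades n. \<Sum>B\<in>blades n.
      if B = A then (if A' = sym_diff A C then W A' * blade_coef s A' A else 0) else 0)"
    unfolding cl_mult_def cl_blade_def by (intro sum.cong refl) (auto simp: sym_diff_eq_iff)
  also have "\<dots> = (\<Sum>B\<in>blades n. if B = sym_diff A C then W B * blade_coef s B A else 0)"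
    using assms(1) by simp
  also have "\<dots> = W (sym_diff A C) * blade_coef s (sym_diff A C) A"
    using cl_carrier_eq_zero[OF assms(2), of "sym_diff A C"] by (auto simp: sum.delta')
  finally show ?thesis .
qed

lemma cl_mult_carrier: "cl_mult n s U V \<in> cl_carrier n"
  unfolding cl_carrier_def
proof (intro CollectI allI impI)
  fix C
  assume "cl_mult n s U V C \<noteq> 0"
  then obtain A B where "A \<in> blades n" "B \<in> blades n" "sym_diff A B = C"
    unfolding cl_mult_def by (smt (verit) sum.neutral)
  then show "C \<subseteq> {..<n}" by blast
qed

lemma cl_one_eq_blade: "cl_one = cl_blade {}"
  by (simp add: cl_one_def cl_blade_def fun_eq_iff)

lemma cl_one_left: "U \<in> cl_carrier n \<Longrightarrow> cl_mult n s cl_one U = U"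
  by (simp add: fun_eq_iff cl_one_eq_blade cl_mult_blade_left)

lemma cl_one_right: "U \<in> cl_carrier n \<Longrightarrow> cl_mult n s U cl_one = U"
  by (simp add: fun_eq_iff cl_one_eq_blade cl_mult_blade_right)

lemma cl_mult_scale_left: "cl_mult n s (\<lambda>A. c * U A) V = (\<lambda>C. c * cl_mult n s U V C)"
  unfolding cl_mult_def by (simp add: fun_eq_iff sum_distrib_left mult_ac if_distrib cong: if_cong)

lemma cl_mult_scale_right: "cl_mult n s U (\<lambda>A. c * V A) = (\<lambda>C. c * cl_mult n s U V C)"
  unfolding cl_mult_def by (simp add: fun_eq_iff sum_distrib_left mult_ac if_distrib cong: if_cong)

section \<open>Clifford conjugation\<close>

definition triangular :: "nat \<Rightarrow> nat" where
  "triangular k = k * (k + 1) div 2"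

lemma triangular_double: "2 * triangular k = k * (k + 1)"
  unfolding triangular_def by simp

lemma triangular_Suc: "triangular (Suc k) = triangular k + Suc k"
proof -
  have "Suc k * (Suc k + 1) = k * (k + 1) + 2 * Suc k" by (simp add: algebra_simps)
  then show ?thesis unfolding triangular_def by simp
qed

lemma triangular_add: "triangular (x + y) = triangular x + triangular y + x * y"
  by (induction y) (simp_all add: triangular_Suc triangular_def[of 0] algebra_simps)

lemma neg_one_power_triangular:
  "(-1::'a::ring_1) ^ triangular k = (if k mod 4 = 0 \<or> k mod 4 = 3 then 1 else -1)"
proof -
  define q r where "q = k div 4" and "r = k mod 4"
  have k: "k = 4 * q + r" unfolding q_def r_def by simp
  have "triangular (4 * q) = 2 * (q * (4 * q + 1))" unfolding triangular_def by simp
  then have "triangular k = triangular r + 2 * (q * (4 * q + 1) + 2 * q * r)"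
    unfolding k triangular_add by simp
  then have "(-1::'a) ^ triangular k = (-1) ^ triangular r" by (simp add: power_add power_mult)
  moreover have "r = 0 \<or> r = 1 \<or> r = 2 \<or> r = 3" unfolding r_def by auto
  ultimately show ?thesis unfolding r_def[symmetric] by (auto simp: triangular_def)
qed

abbreviation cl_conj :: "(nat set \<Rightarrow> 'a::field) \<Rightarrow> (nat set \<Rightarrow> 'a)" where
  "cl_conj U \<equiv> cl_hat (cl_tilde U)"

lemma cl_conj_apply: "cl_conj U A = (-1) ^ triangular (card A) * U A"
proof -
  have "card A + card A * (card A - 1) div 2 = triangular (card A)"
    by (cases "card A") (simp_all add: triangular_def)
  then show ?thesis
    unfolding cl_hat_def cl_tilde_def by (metis mult.assoc power_add)
qed

lemma cl_conj_conj: "cl_conj (cl_conj U) = U"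
  by (simp add: fun_eq_iff cl_conj_apply mult.assoc[symmetric] power_add[symmetric])

lemma cl_conj_one: "cl_conj cl_one = cl_one"
  by (simp add: fun_eq_iff cl_conj_apply cl_one_def triangular_def)

lemma cl_conj_carrier: "U \<in> cl_carrier n \<Longrightarrow> cl_conj U \<in> cl_carrier n"
  by (simp add: cl_carrier_def cl_conj_apply)

lemma neg_one_power_triangular_blade_coef:
  assumes "finite A" "finite B"
  shows "(-1) ^ triangular (card (sym_diff A B)) * blade_coef s A B
    = (-1) ^ triangular (card A) * (-1) ^ triangular (card B) * blade_coef s B A"
proof -
  define a b k where "a = card (A - B)" and "b = card (B - A)" and "k = card (A \<inter> B)"
  have cards: "card A = a + k" "card B = b + k" "card (sym_diff A B) = a + b"
    unfolding a_def b_def k_def using assms card_Int_Diff[of A B] card_Int_Diff[of B A]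
    by (simp_all add: card_Un_disjoint Int_commute disjoint_iff)
  have "triangular (a + b) + ((a + k) * (b + k) + k) + (triangular (a + k) + triangular (b + k))
      = 2 * (triangular a + triangular b + 2 * triangular k + a * b + a * k + b * k)"
    using triangular_double[of k] by (simp add: triangular_add algebra_simps)
  then have "(-1) ^ (triangular (a + b) + ((a + k) * (b + k) + k))
      = ((-1) ^ (triangular (a + k) + triangular (b + k)) :: 'a)"
    by (metis minus_one_power_iff even_add dvd_triv_left)
  then show ?thesis
    using blade_coef_commute[OF assms, of s] cards k_def by (simp add: power_add mult.assoc)
qed

lemma cl_conj_mult: "cl_conj (cl_mult n s U V) = cl_mult n s (cl_conj V) (cl_conj U)"
proof
  fix C
  have "cl_conj (cl_mult n s U V) C = (\<Sum>A\<in>blades n. \<Sum>B\<in>blades n. if sym_diff A B = C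
      then U A * V B * ((-1) ^ triangular (card (sym_diff A B)) * blade_coef s A B) else 0)"
    unfolding cl_conj_apply cl_mult_def sum_distrib_left by (intro sum.cong refl) (simp add: mult_ac)
  also have "\<dots> = (\<Sum>A\<in>blades n. \<Sum>B\<in>blades n. if sym_diff B A = C
      then cl_conj V B * cl_conj U A * blade_coef s B A else 0)"
  proof (intro sum.cong refl)
    fix A B
    assume "A \<in> blades n" "B \<in> blades n"
    then have sign: "(-1) ^ triangular (card (sym_diff A B)) * blade_coef s A B
        = (-1) ^ triangular (card A) * (-1) ^ triangular (card B) * blade_coef s B A"
      by (intro neg_one_power_triangular_blade_coef finite_blade)
    have commute: "sym_diff B A = sym_diff A B" by blast
    show "(if sym_diff A B = C
        then U A * V B * ((-1) ^ triangular (card (sym_diff A B)) * blade_coef s A B) else 0)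
      = (if sym_diff B A = C then cl_conj V B * cl_conj U A * blade_coef s B A else 0)"
      unfolding sign commute by (simp add: cl_conj_apply mult_ac)
  qed
  also have "\<dots> = cl_mult n s (cl_conj V) (cl_conj U) C"
    unfolding cl_mult_def by (rule sum.swap)
  finally show "cl_conj (cl_mult n s U V) C = cl_mult n s (cl_conj V) (cl_conj U) C" .
qed

definition cl_conj_eigenspace :: "nat \<Rightarrow> 'a::field \<Rightarrow> (nat set \<Rightarrow> 'a) set" where
  "cl_conj_eigenspace n c = {U \<in> cl_carrier n. cl_conj U = (\<lambda>A. c * U A)}"

lemma cl_grades_mod4_0_3_eq_eigenspace:
  "cl_grades_mod4 n 0 3 = cl_conj_eigenspace n (1::'a::field_char_0)"
proof -
  have "cl_conj U = (\<lambda>A. 1 * U A)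
      \<longleftrightarrow> (\<forall>A. U A \<noteq> 0 \<longrightarrow> card A mod 4 = 0 \<or> card A mod 4 = 3)"
    for U :: "nat set \<Rightarrow> 'a"
    unfolding fun_eq_iff cl_conj_apply neg_one_power_triangular
    by (auto simp: minus_equation_iff[of "U _"] split: if_splits)
  then show ?thesis unfolding cl_grades_mod4_def cl_conj_eigenspace_def by auto
qed

lemma cl_grades_mod4_1_2_eq_eigenspace:
  "cl_grades_mod4 n 1 2 = cl_conj_eigenspace n (-1::'a::field_char_0)"
proof -
  have mod4: "card A mod 4 = 0 \<or> card A mod 4 = 3 \<longleftrightarrow> \<not> (card A mod 4 = 1 \<or> card A mod 4 = 2)" for A
    by auto
  have "cl_conj U = (\<lambda>A. -1 * U A)
      \<longleftrightarrow> (\<forall>A. U A \<noteq> 0 \<longrightarrow> card A mod 4 = 1 \<or> card A mod 4 = 2)"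
    for U :: "nat set \<Rightarrow> 'a"
    unfolding fun_eq_iff cl_conj_apply neg_one_power_triangular by (auto simp: mod4 split: if_splits)
  then show ?thesis unfolding cl_grades_mod4_def cl_conj_eigenspace_def by auto
qed

lemma cl_blade_carrier: "A \<subseteq> {..<n} \<Longrightarrow> cl_blade A \<in> cl_carrier n"
  by (simp add: cl_blade_def cl_carrier_def)

lemma cl_blade_in_eigenspace:
  "A \<subseteq> {..<n} \<Longrightarrow> cl_blade A \<in> cl_conj_eigenspace n ((-1) ^ triangular (card A))"
  by (simp add: cl_conj_eigenspace_def cl_blade_carrier) (simp add: fun_eq_iff cl_conj_apply cl_blade_def)

section \<open>Invertible elements\<close>

lemma
  assumes "T \<in> cl_units n s"
  shows cl_inv_carrier: "cl_inv n s T \<in> cl_carrier n"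
    and cl_mult_inv_right: "cl_mult n s T (cl_inv n s T) = cl_one"
    and cl_mult_inv_left: "cl_mult n s (cl_inv n s T) T = cl_one"
proof -
  have "\<exists>V. V \<in> cl_carrier n \<and> cl_mult n s T V = cl_one \<and> cl_mult n s V T = cl_one"
    using assms unfolding cl_units_def by blast
  from someI_ex[OF this]
  show "cl_inv n s T \<in> cl_carrier n" "cl_mult n s T (cl_inv n s T) = cl_one"
    "cl_mult n s (cl_inv n s T) T = cl_one"
    unfolding cl_inv_def by auto
qed

lemma cl_units_carrier: "T \<in> cl_units n s \<Longrightarrow> T \<in> cl_carrier n"
  by (simp add: cl_units_def)

lemma
  assumes "T \<in> cl_units n s"
  shows cl_mult_conj_inv_right: "cl_mult n s (cl_conj T) (cl_conj (cl_inv n s T)) = cl_one"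
    and cl_mult_conj_inv_left: "cl_mult n s (cl_conj (cl_inv n s T)) (cl_conj T) = cl_one"
  using cl_mult_inv_left[OF assms] cl_mult_inv_right[OF assms]
  by (metis cl_conj_mult cl_conj_one)+

lemma cl_conj_mult_self_unit:
  assumes "T \<in> cl_units n s"
  shows "cl_mult n s (cl_conj T) T \<in> cl_units n s"
proof -
  let ?M = "cl_mult n s" and ?Ti = "cl_inv n s T"
  have "?M (?M (cl_conj T) T) (?M ?Ti (cl_conj ?Ti)) = ?M (cl_conj T) (?M (?M T ?Ti) (cl_conj ?Ti))"
    by (simp add: cl_mult_assoc)
  also have "\<dots> = cl_one"
    using assms by (simp add: cl_mult_inv_right cl_one_left cl_conj_carrier cl_inv_carrier
        cl_mult_conj_inv_right)
  finally have right: "?M (?M (cl_conj T) T) (?M ?Ti (cl_conj ?Ti)) = cl_one" .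
  have "?M (?M ?Ti (cl_conj ?Ti)) (?M (cl_conj T) T) = ?M ?Ti (?M (?M (cl_conj ?Ti) (cl_conj T)) T)"
    by (simp add: cl_mult_assoc)
  also have "\<dots> = cl_one"
    using assms by (simp add: cl_mult_conj_inv_left cl_one_left cl_units_carrier cl_mult_inv_left)
  finally have left: "?M (?M ?Ti (cl_conj ?Ti)) (?M (cl_conj T) T) = cl_one" .
  show ?thesis
    unfolding cl_units_def using left right cl_mult_carrier by blast
qed

lemma cl_inverse_unique:
  assumes "V \<in> cl_carrier n" "W \<in> cl_carrier n" "cl_mult n s V T = cl_one" "cl_mult n s T W = cl_one"
  shows "V = W"
  by (metis assms cl_mult_assoc cl_one_left cl_one_right)

section \<open>The centre\<close>

lemma cl_center_commute:
  assumes "z \<in> cl_center n"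
  shows "cl_mult n s z U = cl_mult n s U z"
proof
  fix C
  have "cl_mult n s z U C = (\<Sum>A\<in>blades n. \<Sum>B\<in>blades n.
      if sym_diff B A = C then U B * z A * blade_coef s B A else 0)"
    unfolding cl_mult_def
  proof (intro sum.cong refl)
    fix A B
    assume AB: "A \<in> blades n" "B \<in> blades n"
    have "z A * blade_coef s A B = z A * blade_coef s B A"
    proof (cases "z A = 0")
      case False
      then have "A = {} \<or> (odd n \<and> A = {..<n})"
        using assms unfolding cl_center_def by blast
      then show ?thesis
      proof
        assume A: "odd n \<and> A = {..<n}"
        then have "card A * card B + card (A \<inter> B) = (n + 1) * card B"
          using AB by (simp add: Int_absorb1)
        then show ?thesis
          using A AB blade_coef_commute[of A B s] by (simp add: finite_blade)
      qed simp
    qed simp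
    moreover have "sym_diff B A = sym_diff A B" by blast
    ultimately show "(if sym_diff A B = C then z A * U B * blade_coef s A B else 0)
      = (if sym_diff B A = C then U B * z A * blade_coef s B A else 0)"
      by (simp add: mult_ac)
  qed
  also have "\<dots> = cl_mult n s U z C"
    unfolding cl_mult_def by (rule sum.swap)
  finally show "cl_mult n s z U C = cl_mult n s U z C" .
qed

lemma blade_coef_nonzero:
  assumes "\<forall>i. s i \<noteq> 0"
  shows "blade_coef s A B \<noteq> (0::'a::field)"
  using assms by (cases "finite (A \<inter> B)") (auto simp: blade_coef_def prod_zero_iff)

lemma commuting_blade_parity:
  fixes W :: "nat set \<Rightarrow> 'a::field_char_0"
  assumes s: "\<forall>i. s i \<noteq> 0" and A: "A \<subseteq> {..<n}" and W: "W \<in> cl_carrier n"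
    and commute: "cl_mult n s (cl_blade A) W = cl_mult n s W (cl_blade A)"
    and nonzero: "W B \<noteq> 0"
  shows "even (card A * card B + card (A \<inter> B))"
proof (rule ccontr)
  assume odd: "\<not> ?thesis"
  have B: "B \<subseteq> {..<n}" using W nonzero cl_carrier_eq_zero by blast
  have "sym_diff A (sym_diff A B) = B" by blast
  then have "W B * blade_coef s A B = W B * blade_coef s B A"
    using fun_cong[OF commute, of "sym_diff A B"] by (simp add: cl_mult_blade_left cl_mult_blade_right A W)
  moreover have "blade_coef s A B = - blade_coef s B A"
    using blade_coef_commute[of A B s] A B odd by (auto intro: finite_subset)
  ultimately have "blade_coef s B A = 0" using nonzero by simp
  then show False using blade_coef_nonzero[OF s] by blast
qed

lemma cl_center_if_commutes_with_vectors:
  fixes z :: "nat set \<Rightarrow> 'a::field_char_0"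
  assumes s: "\<forall>i. s i \<noteq> 0" and z: "z \<in> cl_carrier n"
    and commute: "\<And>a. a < n \<Longrightarrow> cl_mult n s (cl_blade {a}) z = cl_mult n s z (cl_blade {a})"
  shows "z \<in> cl_center n"
  unfolding cl_center_def
proof (intro CollectI conjI z allI impI)
  fix B
  assume nonzero: "z B \<noteq> 0"
  have parity: "even (card B + (if a \<in> B then 1 else 0))" if "a < n" for a
    using commuting_blade_parity[OF s _ z commute[OF that] nonzero] that
    by (simp add: Int_insert_left)
  have B: "B \<subseteq> {..<n}" using z nonzero cl_carrier_eq_zero by blast
  show "B = {} \<or> odd n \<and> B = {..<n}"
  proof (cases "B = {..<n}")
    case True
    then show ?thesis using parity[of 0] by (cases "n = 0") auto
  next
    case False
    then obtain c where "c < n" "c \<notin> B" using B by auto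
    then show ?thesis using parity[of c] parity B by fastforce
  qed
qed

lemma cl_center_if_commutes_with_trivectors:
  fixes z :: "nat set \<Rightarrow> 'a::field_char_0"
  assumes s: "\<forall>i. s i \<noteq> 0" and z: "z \<in> cl_carrier n" and n: "4 \<le> n"
    and commute: "\<And>A. A \<subseteq> {..<n} \<Longrightarrow> card A = 3
      \<Longrightarrow> cl_mult n s (cl_blade A) z = cl_mult n s z (cl_blade A)"
  shows "z \<in> cl_center n"
  unfolding cl_center_def
proof (intro CollectI conjI z allI impI)
  fix B
  assume nonzero: "z B \<noteq> 0"
  have parity: "even (card (A \<inter> B) + card B)" if "A \<subseteq> {..<n}" "card A = 3" for A
    using commuting_blade_parity[OF s that(1) z commute[OF that] nonzero] that by simp
  have B: "B \<subseteq> {..<n}" using z nonzero cl_carrier_eq_zero by blast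
  show "B = {} \<or> odd n \<and> B = {..<n}"
  proof (cases "B = {} \<or> B = {..<n}")
    case True
    moreover have "B = {..<n} \<Longrightarrow> odd n"
      using parity[of "{0, 1, 2}"] n by (simp add: insert_absorb)
    ultimately show ?thesis by auto
  next
    case False
    then obtain b c where b: "b \<in> B" and c: "c < n" "c \<notin> B" using B by auto
    then have "card {b, c} = 2" by (auto simp: card_2_iff)
    then have "2 \<le> card ({..<n} - {b, c})"
      using b c B n by (subst card_Diff_subset) auto
    then obtain x y where xy: "{x, y} \<subseteq> {..<n} - {b, c}" "x \<noteq> y"
      by (metis obtain_subset_with_card_n card_2_iff)
    have "card ({b, x, y} \<inter> B) = Suc (card ({c, x, y} \<inter> B))"
      using b c xy by (simp add: Int_insert_left)
    then show ?thesis
      using parity[of "{b, x, y}"] parity[of "{c, x, y}"] b c xy B by auto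
  qed
qed

lemma cl_center_if_self_conjugate:
  assumes n: "n < 4" and z: "z \<in> cl_conj_eigenspace n (1::'a::field_char_0)"
  shows "z \<in> cl_center n"
  unfolding cl_center_def
proof (intro CollectI conjI allI impI)
  show "z \<in> cl_carrier n" using z by (simp add: cl_conj_eigenspace_def)
  fix B
  assume nonzero: "z B \<noteq> 0"
  then have B: "B \<subseteq> {..<n}" and "card B mod 4 = 0 \<or> card B mod 4 = 3"
    using z unfolding cl_grades_mod4_0_3_eq_eigenspace[symmetric] cl_grades_mod4_def cl_carrier_def
    by auto
  moreover have "card B \<le> n" using card_mono[OF _ B] by simp
  ultimately have "card B = 0 \<or> (card B = n \<and> n = 3)" using n by auto
  then show "B = {} \<or> odd n \<and> B = {..<n}"
    using B card_subset_eq[OF _ B] finite_subset[OF B] by auto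
qed

section \<open>The groups B and Gamma\<close>

lemma cl_B_conjugate_in_eigenspace:
  assumes T: "T \<in> cl_B n s" and U: "U \<in> cl_conj_eigenspace n c"
  shows "cl_mult n s (cl_mult n s T U) (cl_inv n s T) \<in> cl_conj_eigenspace n c"
proof -
  let ?M = "cl_mult n s" and ?Ti = "cl_inv n s T"
  define z where "z = ?M (cl_conj T) T"
  have Tu: "T \<in> cl_units n s" and "z \<in> cl_center_units n s"
    using T unfolding cl_B_def z_def by auto
  then obtain zi where zi: "zi \<in> cl_carrier n" "?M z zi = cl_one" "?M zi z = cl_one"
    and z: "z \<in> cl_center n"
    unfolding cl_center_units_def cl_units_def by auto
  have "?M z ?Ti = ?M (cl_conj T) (?M T ?Ti)"
    unfolding z_def by (rule cl_mult_assoc)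
  also have "\<dots> = cl_conj T"
    using Tu by (simp add: cl_mult_inv_right cl_one_right cl_conj_carrier cl_units_carrier)
  finally have conj_T: "cl_conj T = ?M z ?Ti" ..
  have "?M (cl_conj T) (?M T zi) = ?M z (?M (?M ?Ti T) zi)"
    unfolding conj_T by (simp add: cl_mult_assoc)
  also have "\<dots> = cl_one"
    using Tu zi by (simp add: cl_mult_inv_left cl_one_left)
  finally have right_inverse: "?M (cl_conj T) (?M T zi) = cl_one" .
  have conj_Ti: "cl_conj ?Ti = ?M T zi"
    by (rule cl_inverse_unique[OF _ cl_mult_carrier _ right_inverse])
      (simp_all add: Tu cl_conj_carrier cl_inv_carrier cl_mult_conj_inv_left)
  have conj_U: "cl_conj U = (\<lambda>A. c * U A)"
    using U by (simp add: cl_conj_eigenspace_def)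
  have central: "?M U (?M z ?Ti) = ?M z (?M U ?Ti)"
    by (metis cl_mult_assoc cl_center_commute[OF z])
  have "cl_conj (?M (?M T U) ?Ti) = ?M (?M T zi) (?M (\<lambda>A. c * U A) (?M z ?Ti))"
    by (simp only: cl_conj_mult conj_U conj_T conj_Ti)
  also have "\<dots> = (\<lambda>A. c * ?M (?M T zi) (?M z (?M U ?Ti)) A)"
    by (simp only: cl_mult_scale_left cl_mult_scale_right central)
  also have "?M (?M T zi) (?M z (?M U ?Ti)) = ?M T (?M (?M zi z) (?M U ?Ti))"
    by (simp only: cl_mult_assoc)
  also have "\<dots> = ?M (?M T U) ?Ti"
    by (simp add: zi cl_one_left cl_mult_carrier cl_mult_assoc)
  finally show ?thesis
    unfolding cl_conj_eigenspace_def using cl_mult_carrier by blast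
qed

lemma cl_B_subset_Gamma: "cl_B n s \<subseteq> cl_Gamma n s (cl_conj_eigenspace n c)"
  unfolding cl_Gamma_def using cl_B_conjugate_in_eigenspace by (fastforce simp: cl_B_def)

lemma cl_Gamma_eigenspace_commute:
  assumes T: "T \<in> cl_Gamma n s (cl_conj_eigenspace n c)" and c: "c \<noteq> 0"
    and e: "e \<in> cl_conj_eigenspace n c"
  shows "cl_mult n s e (cl_mult n s (cl_conj T) T) = cl_mult n s (cl_mult n s (cl_conj T) T) e"
proof -
  let ?M = "cl_mult n s" and ?Ti = "cl_inv n s T"
  have Tu: "T \<in> cl_units n s" using T by (simp add: cl_Gamma_def)
  have e_carrier: "e \<in> cl_carrier n" and conj_e: "cl_conj e = (\<lambda>A. c * e A)"
    using e by (auto simp: cl_conj_eigenspace_def)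
  have "cl_conj (?M (?M T e) ?Ti) = (\<lambda>A. c * ?M (?M T e) ?Ti A)"
    using T e unfolding cl_Gamma_def cl_conj_eigenspace_def by blast
  then have "(\<lambda>A. c * ?M (cl_conj ?Ti) (?M e (cl_conj T)) A) = (\<lambda>A. c * ?M (?M T e) ?Ti A)"
    by (simp add: cl_conj_mult conj_e cl_mult_scale_left cl_mult_scale_right)
  then have conjugated: "?M (cl_conj ?Ti) (?M e (cl_conj T)) = ?M (?M T e) ?Ti"
    using c by (simp add: fun_eq_iff)
  have "?M e (?M (cl_conj T) T) = ?M (?M (cl_conj T) (cl_conj ?Ti)) (?M e (?M (cl_conj T) T))"
    using Tu by (simp add: cl_mult_conj_inv_right cl_one_left cl_mult_carrier)
  also have "\<dots> = ?M (cl_conj T) (?M (?M (cl_conj ?Ti) (?M e (cl_conj T))) T)"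
    by (simp add: cl_mult_assoc)
  also have "\<dots> = ?M (?M (cl_conj T) T) e"
    using Tu by (simp add: conjugated cl_mult_assoc cl_mult_inv_left cl_one_right e_carrier)
  finally show ?thesis .
qed

lemma cl_B_intro:
  assumes "T \<in> cl_units n s" "cl_mult n s (cl_conj T) T \<in> cl_center n"
  shows "T \<in> cl_B n s"
  using assms cl_conj_mult_self_unit[OF assms(1)]
  unfolding cl_B_def cl_center_units_def by auto

lemma cl_Gamma_neg_one_eigenspace_subset_B:
  fixes s :: "nat \<Rightarrow> 'a::field_char_0"
  assumes s: "\<forall>i. s i \<noteq> 0"
  shows "cl_Gamma n s (cl_conj_eigenspace n (-1)) \<subseteq> cl_B n s"
proof
  fix T
  assume T: "T \<in> cl_Gamma n s (cl_conj_eigenspace n (-1))"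
  have "cl_mult n s (cl_conj T) T \<in> cl_center n"
  proof (rule cl_center_if_commutes_with_vectors[OF s cl_mult_carrier])
    fix a
    assume "a < n"
    then have "cl_blade {a} \<in> cl_conj_eigenspace n (-1::'a)"
      using cl_blade_in_eigenspace[of "{a}" n] by (simp add: triangular_def)
    then show "cl_mult n s (cl_blade {a}) (cl_mult n s (cl_conj T) T)
      = cl_mult n s (cl_mult n s (cl_conj T) T) (cl_blade {a})"
      using T by (intro cl_Gamma_eigenspace_commute) auto
  qed
  then show "T \<in> cl_B n s"
    using T by (intro cl_B_intro) (simp_all add: cl_Gamma_def)
qed

lemma cl_Gamma_one_eigenspace_subset_B:
  fixes s :: "nat \<Rightarrow> 'a::field_char_0"
  assumes s: "\<forall>i. s i \<noteq> 0"
  shows "cl_Gamma n s (cl_conj_eigenspace n 1) \<subseteq> cl_B n s"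
proof
  fix T
  assume T: "T \<in> cl_Gamma n s (cl_conj_eigenspace n 1)"
  define z where "z = cl_mult n s (cl_conj T) T"
  have "z \<in> cl_center n"
  proof (cases "4 \<le> n")
    case True
    show ?thesis
    proof (rule cl_center_if_commutes_with_trivectors[OF s _ True])
      fix A
      assume "A \<subseteq> {..<n}" "card A = 3"
      then have "cl_blade A \<in> cl_conj_eigenspace n (1::'a)"
        using cl_blade_in_eigenspace[of A n] by (simp add: triangular_def)
      then show "cl_mult n s (cl_blade A) z = cl_mult n s z (cl_blade A)"
        unfolding z_def using T by (intro cl_Gamma_eigenspace_commute) auto
    qed (simp add: z_def cl_mult_carrier)
  next
    case False
    have "cl_conj z = z" unfolding z_def by (simp add: cl_conj_mult cl_conj_conj)
    then show ?thesis
      using False by (intro cl_center_if_self_conjugate)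
        (auto simp: cl_conj_eigenspace_def z_def cl_mult_carrier)
  qed
  then show "T \<in> cl_B n s"
    using T unfolding z_def by (intro cl_B_intro) (simp_all add: cl_Gamma_def)
qed

theorem cl_B_eq_Gamma:
  fixes s :: "nat \<Rightarrow> 'a::field_char_0"
  assumes "\<forall>i. s i \<noteq> 0"
  shows "cl_B n s = cl_Gamma n s (cl_grades_mod4 n 0 3)"
    and "cl_Gamma n s (cl_grades_mod4 n 0 3) = cl_Gamma n s (cl_grades_mod4 n 1 2)"
  using cl_B_subset_Gamma cl_Gamma_one_eigenspace_subset_B[OF assms]
    cl_Gamma_neg_one_eigenspace_subset_B[OF assms]
  unfolding cl_grades_mod4_0_3_eq_eigenspace cl_grades_mod4_1_2_eq_eigenspace by blast+

theorem mainTheorem8: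
  shows "(\<forall>p q. p + q \<ge> 2 \<longrightarrow>
           (let n = p + q; s = real_sig p in
             cl_B n s = cl_Gamma n s (cl_grades_mod4 n 0 3) \<and>
             cl_Gamma n s (cl_grades_mod4 n 0 3) = cl_Gamma n s (cl_grades_mod4 n 1 2)))
       \<and> (\<forall>n::nat. n \<ge> 2 \<longrightarrow>
           cl_B n complex_sig = cl_Gamma n complex_sig (cl_grades_mod4 n 0 3) \<and>
           cl_Gamma n complex_sig (cl_grades_mod4 n 0 3) = cl_Gamma n complex_sig (cl_grades_mod4 n 1 2))"
proof -
  have "\<forall>i. real_sig p i \<noteq> 0" for p by (simp add: real_sig_def)
  moreover have "\<forall>i. complex_sig i \<noteq> 0" by (simp add: complex_sig_def)
  ultimately show ?thesis by (simp add: Let_def cl_B_eq_Gamma)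
qed

end
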